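(* Let $\mu,\nu\in\mathfrak h^*_{\mathbb R}$ be small. If $\mu-\nu\in Q^\vee$, then $\mu=\nu$.
   Context: $\mathfrak h$ is a Cartan subalgebra of a complex semisimple Lie algebra with root system $\Delta\subset\mathfrak h^*$, invariant bilinear form $(\cdot,\cdot)$ normalized by $(\alpha,\alpha)=2$ for short roots, coroots $\alpha^\vee=2\alpha/(\alpha,\alpha)$ regarded in $\mathfrak h^*_{\mathbb R}$ via the form, and $Q^\vee$ the coroot lattice. A weight $\nu\in\mathfrak h^*_{\mathbb R}$ is called small if $(\nu,\alpha)<1$ for every $\alpha\in\Delta$. *)

theory Defs
  imports "HOL-Analysis.Analysis"
begin

text \<open>The real form h*_R is modelled by a Euclidean space type 'a; the invariant
bilinear form is its inner product.\<close>

definition root_reflection :: "'a::euclidean_space \<Rightarrow> 'a \<Rightarrow> 'a" where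
  "root_reflection \<alpha> x = x - (2 * (x \<bullet> \<alpha>) / (\<alpha> \<bullet> \<alpha>)) *\<^sub>R \<alpha>"

text \<open>Reduced crystallographic root system spanning the space
(root system of a complex semisimple Lie algebra).\<close>
definition root_system :: "'a::euclidean_space set \<Rightarrow> bool" where
  "root_system R \<longleftrightarrow>
     finite R \<and> 0 \<notin> R \<and> span R = UNIV \<and>
     (\<forall>\<alpha>\<in>R. root_reflection \<alpha> ` R \<subseteq> R) \<and>
     (\<forall>\<alpha>\<in>R. \<forall>\<beta>\<in>R. 2 * (\<beta> \<bullet> \<alpha>) / (\<alpha> \<bullet> \<alpha>) \<in> \<int>) \<and>
     (\<forall>\<alpha>\<in>R. \<forall>c::real. c *\<^sub>R \<alpha> \<in> R \<longrightarrow> c = 1 \<or> c = -1)"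

text \<open>Two roots lie in the same irreducible component (simple ideal).\<close>
definition same_component :: "'a::euclidean_space set \<Rightarrow> 'a \<Rightarrow> 'a \<Rightarrow> bool" where
  "same_component R \<alpha> \<beta> \<longleftrightarrow>
     (\<lambda>x y. x \<in> R \<and> y \<in> R \<and> x \<bullet> y \<noteq> 0)\<^sup>*\<^sup>* \<alpha> \<beta>"

definition short_root :: "'a::euclidean_space set \<Rightarrow> 'a \<Rightarrow> bool" where
  "short_root R \<alpha> \<longleftrightarrow> \<alpha> \<in> R \<and> (\<forall>\<beta>\<in>R. same_component R \<alpha> \<beta> \<longrightarrow> \<alpha> \<bullet> \<alpha> \<le> \<beta> \<bullet> \<beta>)"

definition normalized_form :: "'a::euclidean_space set \<Rightarrow> bool" where
  "normalized_form R \<longleftrightarrow> (\<forall>\<alpha>. short_root R \<alpha> \<longrightarrow> \<alpha> \<bullet> \<alpha> = 2)"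

definition coroot :: "'a::euclidean_space \<Rightarrow> 'a" where
  "coroot \<alpha> = (2 / (\<alpha> \<bullet> \<alpha>)) *\<^sub>R \<alpha>"

definition coroot_lattice :: "'a::euclidean_space set \<Rightarrow> 'a set" where
  "coroot_lattice R = {x. \<exists>c::'a \<Rightarrow> int. x = (\<Sum>\<alpha>\<in>R. of_int (c \<alpha>) *\<^sub>R coroot \<alpha>)}"

definition small :: "'a::euclidean_space set \<Rightarrow> 'a \<Rightarrow> bool" where
  "small R \<nu> \<longleftrightarrow> (\<forall>\<alpha>\<in>R. \<nu> \<bullet> \<alpha> < 1)"

end

theory Submission
  imports Defs
begin

text \<open>Write \<open>\<mu> - \<nu>\<close> as a sum \<open>l\<close> of coroots \<open>\<beta>\<^sub>1\<^sup>\<or> + \<dots> + \<beta>\<^sub>n\<^sup>\<or>\<close> of roots (negative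
  coefficients are absorbed by \<open>(-\<beta>)\<^sup>\<or> = -\<beta>\<^sup>\<or>\<close>). Smallness gives \<open>|(l,\<alpha>)| < 2\<close> for every
  root \<open>\<alpha>\<close>, and this bound is invariant under the Weyl group. If \<open>l \<noteq> 0\<close>, then
  \<open>0 < (l,l) = \<Sum>\<^sub>i (\<beta>\<^sub>i\<^sup>\<or>, l)\<close>, so \<open>(l,\<beta>\<^sub>i) > 0\<close> for some \<open>i\<close>; being an integer below 2 it equals 1,
  and the reflection \<open>s\<^sub>\<beta>\<^sub>i l = l - \<beta>\<^sub>i\<^sup>\<or>\<close> is a shorter sum of coroots satisfying the same bound.
  By induction on \<open>n\<close> it vanishes, so \<open>l = \<beta>\<^sub>i\<^sup>\<or>\<close> and \<open>(l,\<beta>\<^sub>i) = 2\<close>, a contradiction.\<close>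

lemma root_system_root_reflection_mem:
  "root_system R \<Longrightarrow> \<alpha> \<in> R \<Longrightarrow> \<beta> \<in> R \<Longrightarrow> root_reflection \<alpha> \<beta> \<in> R"
  unfolding root_system_def by blast

lemma root_system_inner_self_pos: "root_system R \<Longrightarrow> \<alpha> \<in> R \<Longrightarrow> 0 < \<alpha> \<bullet> \<alpha>"
  unfolding root_system_def by auto

lemma root_system_uminus_mem:
  assumes "root_system R" "\<alpha> \<in> R"
  shows "- \<alpha> \<in> R"
proof -
  have "root_reflection \<alpha> \<alpha> = - \<alpha>"
    using root_system_inner_self_pos[OF assms]
    by (simp add: root_reflection_def algebra_simps scaleR_2)
  then show ?thesis
    using root_system_root_reflection_mem[OF assms(1,2,2)] by simp
qed

lemma root_system_coroot_inner_Ints: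
  "root_system R \<Longrightarrow> \<alpha> \<in> R \<Longrightarrow> \<beta> \<in> R \<Longrightarrow> coroot \<alpha> \<bullet> \<beta> \<in> \<int>"
  unfolding root_system_def coroot_def by (simp add: inner_commute)

lemma coroot_uminus: "coroot (- \<alpha>) = - coroot \<alpha>"
  by (simp add: coroot_def)

lemma coroot_inner_self: "\<alpha> \<noteq> 0 \<Longrightarrow> coroot \<alpha> \<bullet> \<alpha> = 2"
  by (simp add: coroot_def)

lemma root_reflection_eq_coroot: "root_reflection \<alpha> x = x - (x \<bullet> \<alpha>) *\<^sub>R coroot \<alpha>"
  by (simp add: root_reflection_def coroot_def)

lemma inner_root_reflection_commute:
  "root_reflection \<alpha> x \<bullet> y = x \<bullet> root_reflection \<alpha> y"
  by (simp add: root_reflection_def inner_diff_left inner_diff_right inner_commute)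

lemma inner_sum_list_left: "sum_list xs \<bullet> y = sum_list (map (\<lambda>x. x \<bullet> y) xs)"
  by (induction xs) (auto simp: inner_add_left)

lemma sum_list_map_Ints: "(\<And>x. x \<in> set xs \<Longrightarrow> f x \<in> \<int>) \<Longrightarrow> sum_list (map f xs) \<in> \<int>"
  by (induction xs) auto

lemma sum_list_replicate_scaleR: "sum_list (replicate n x) = of_nat n *\<^sub>R (x :: 'a::real_vector)"
  by (induction n) (auto simp: algebra_simps)

lemma coroot_multiple_eq_sum_list:
  assumes "root_system R" "\<alpha> \<in> R"
  obtains \<beta>s where "set \<beta>s \<subseteq> R" "of_int k *\<^sub>R coroot \<alpha> = sum_list (map coroot \<beta>s)"
proof (cases "k \<ge> 0")
  case True
  then have "of_int k *\<^sub>R coroot \<alpha> = sum_list (map coroot (replicate (nat k) \<alpha>))"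
    by (simp add: sum_list_replicate_scaleR)
  with that[of "replicate (nat k) \<alpha>"] assms(2) show ?thesis
    by (auto simp: set_replicate_conv_if)
next
  case False
  then have "of_int k *\<^sub>R coroot \<alpha> = sum_list (map coroot (replicate (nat (- k)) (- \<alpha>)))"
    by (simp add: sum_list_replicate_scaleR coroot_uminus)
  with that[of "replicate (nat (- k)) (- \<alpha>)"] root_system_uminus_mem[OF assms]
  show ?thesis
    by (auto simp: set_replicate_conv_if)
qed

lemma coroot_lattice_eq_sum_list:
  assumes "root_system R" "x \<in> coroot_lattice R"
  obtains \<beta>s where "set \<beta>s \<subseteq> R" "x = sum_list (map coroot \<beta>s)"
proof -
  obtain c where x: "x = (\<Sum>\<alpha>\<in>R. of_int (c \<alpha>) *\<^sub>R coroot \<alpha>)"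
    using assms(2) unfolding coroot_lattice_def by blast
  have "\<exists>\<beta>s. set \<beta>s \<subseteq> R \<and> (\<Sum>\<alpha>\<in>S. of_int (c \<alpha>) *\<^sub>R coroot \<alpha>) = sum_list (map coroot \<beta>s)"
    if "finite S" "S \<subseteq> R" for S
    using that
  proof (induction S rule: finite_induct)
    case empty
    show ?case by (auto intro: exI[of _ "[]"])
  next
    case (insert \<alpha> S)
    obtain \<beta>s where "set \<beta>s \<subseteq> R" "(\<Sum>\<alpha>\<in>S. of_int (c \<alpha>) *\<^sub>R coroot \<alpha>) = sum_list (map coroot \<beta>s)"
      using insert by auto
    moreover obtain \<gamma>s where "set \<gamma>s \<subseteq> R" "of_int (c \<alpha>) *\<^sub>R coroot \<alpha> = sum_list (map coroot \<gamma>s)"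
      using coroot_multiple_eq_sum_list[OF assms(1)] insert.prems by blast
    ultimately show ?case
      using insert.hyps by (intro exI[of _ "\<gamma>s @ \<beta>s"]) auto
  qed
  moreover have "finite R"
    using assms(1) unfolding root_system_def by blast
  ultimately show ?thesis
    using that x by blast
qed

lemma coroot_sum_inner_pos_term:
  assumes "root_system R" "set \<beta>s \<subseteq> R" "l = sum_list (map coroot \<beta>s)" "l \<noteq> 0"
  obtains \<beta> where "\<beta> \<in> set \<beta>s" "0 < l \<bullet> \<beta>"
proof (rule ccontr)
  assume "\<not> thesis"
  with that have "l \<bullet> \<beta> \<le> 0" if "\<beta> \<in> set \<beta>s" for \<beta>
    using \<open>\<beta> \<in> set \<beta>s\<close> by force
  then have "coroot \<beta> \<bullet> l \<le> 0" if "\<beta> \<in> set \<beta>s" for \<beta>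
    using that root_system_inner_self_pos[OF assms(1)] assms(2)
    by (force simp: coroot_def inner_commute divide_nonpos_pos)
  then have "l \<bullet> l \<le> 0"
    unfolding assms(3) inner_sum_list_left[of _ "sum_list _"] map_map o_def
    by (intro sum_list_nonpos) auto
  with assms(4) show False
    by (simp add: inner_gt_zero_iff not_less[symmetric])
qed

lemma coroot_sum_eq_0_if_inner_roots_bounded:
  assumes "root_system R" "set \<beta>s \<subseteq> R" "l = sum_list (map coroot \<beta>s)"
    and "\<forall>\<alpha>\<in>R. \<bar>l \<bullet> \<alpha>\<bar> < 2"
  shows "l = 0"
  using assms(2-)
proof (induction "length \<beta>s" arbitrary: \<beta>s l rule: less_induct)
  case less
  show ?case
  proof (rule ccontr)
    assume "l \<noteq> 0"
    then obtain \<beta> where \<beta>: "\<beta> \<in> set \<beta>s" "0 < l \<bullet> \<beta>"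
      using coroot_sum_inner_pos_term[OF assms(1) less.prems(1,2)] by blast
    have "\<beta> \<in> R"
      using \<beta>(1) less.prems(1) by auto
    have "l \<bullet> \<beta> \<in> \<int>"
      unfolding less.prems(2) inner_sum_list_left map_map o_def
      using less.prems(1) root_system_coroot_inner_Ints[OF assms(1) _ \<open>\<beta> \<in> R\<close>]
      by (intro sum_list_map_Ints) auto
    moreover have "\<bar>l \<bullet> \<beta>\<bar> < 2"
      using less.prems(3) \<open>\<beta> \<in> R\<close> by blast
    ultimately have "l \<bullet> \<beta> = 1"
      using \<beta>(2) by (auto elim!: Ints_cases)
    then have reflection: "root_reflection \<beta> l = l - coroot \<beta>"
      by (simp add: root_reflection_eq_coroot)
    have "l - coroot \<beta> = 0"
    proof (rule less.hyps)
      show "length (remove1 \<beta> \<beta>s) < length \<beta>s"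
        using \<beta>(1) by (auto simp: length_remove1 intro: diff_less length_pos_if_in_set)
      show "set (remove1 \<beta> \<beta>s) \<subseteq> R"
        using less.prems(1) set_remove1_subset by fastforce
      show "l - coroot \<beta> = sum_list (map coroot (remove1 \<beta> \<beta>s))"
        using sum_list_map_remove1[OF \<beta>(1), of coroot] less.prems(2) by simp
      show "\<forall>\<alpha>\<in>R. \<bar>(l - coroot \<beta>) \<bullet> \<alpha>\<bar> < 2"
        using less.prems(3) root_system_root_reflection_mem[OF assms(1) \<open>\<beta> \<in> R\<close>]
        by (simp flip: reflection add: inner_root_reflection_commute)
    qed
    then have "l \<bullet> \<beta> = 2"
      using root_system_inner_self_pos[OF assms(1) \<open>\<beta> \<in> R\<close>] by (simp add: coroot_inner_self)
    with \<open>l \<bullet> \<beta> = 1\<close> show False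
      by simp
  qed
qed

lemma small_diff_inner_roots_bounded:
  assumes "root_system R" "small R \<mu>" "small R \<nu>" "\<alpha> \<in> R"
  shows "\<bar>(\<mu> - \<nu>) \<bullet> \<alpha>\<bar> < 2"
proof -
  have "\<mu> \<bullet> \<alpha> < 1" "\<nu> \<bullet> \<alpha> < 1" "\<mu> \<bullet> (- \<alpha>) < 1" "\<nu> \<bullet> (- \<alpha>) < 1"
    using assms root_system_uminus_mem[OF assms(1,4)] unfolding small_def by blast+
  then show ?thesis
    by (simp add: inner_diff_left)
qed

theorem mainTheorem2:
  fixes R :: "'a::euclidean_space set" and \<mu> \<nu> :: 'a
  assumes "root_system R" and "normalized_form R"
    and "small R \<mu>" and "small R \<nu>"
    and "\<mu> - \<nu> \<in> coroot_lattice R"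
  shows "\<mu> = \<nu>"
proof -
  obtain \<beta>s where "set \<beta>s \<subseteq> R" "\<mu> - \<nu> = sum_list (map coroot \<beta>s)"
    using coroot_lattice_eq_sum_list[OF assms(1,5)] by blast
  moreover have "\<forall>\<alpha>\<in>R. \<bar>(\<mu> - \<nu>) \<bullet> \<alpha>\<bar> < 2"
    using small_diff_inner_roots_bounded[OF assms(1,3,4)] by blast
  ultimately have "\<mu> - \<nu> = 0"
    using coroot_sum_eq_0_if_inner_roots_bounded[OF assms(1)] by blast
  then show ?thesis
    by simp
qed

end
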